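(* Let $g:\mathbb{R}^n\to\mathbb{R}$ be a convex function and let $\mathcal{S}=\{x\in\mathbb{R}^n : g(x)\le 0\}$. Let $f_d:\mathbb{R}^n\to\mathbb{R}^n$ be continuously differentiable and consider the discrete system $x_{k+1}=f_d(x_k)$. Assume that there exists $x^0\in\mathbb{R}^n$ with $g(x^0)<0$, and that the function $x\mapsto g(f_d(x))$ is concave. Then $\mathcal{S}$ is an invariant set for this discrete system if and only if there exists $\alpha\ge 0$ such that $$\alpha g(x)-g(f_d(x))\ge 0\quad\text{for all } x\in\mathbb{R}^n.$$ Moreover, if $g$ and $x\mapsto g(f_d(x))$ are quadratic functions, then the same equivalence holds without the assumption that $x\mapsto g(f_d(x))$ is concave.
   Context: A set $\mathcal{S}\subseteq\mathbb{R}^n$ is an invariant set for the discrete system $x_{k+1}=f_d(x_k)$ if $x_k\in\mathcal{S}$ implies $x_{k+1}\in\mathcal{S}$ for all $k\in\mathbb{N}$. *)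

theory Defs
  imports "HOL-Analysis.Analysis"
begin

definition cont_diff_everywhere :: "(real^'n \<Rightarrow> real^'n) \<Rightarrow> bool" where
  "cont_diff_everywhere f \<longleftrightarrow>
     (\<exists>f' :: real^'n \<Rightarrow> ((real^'n) \<Rightarrow>\<^sub>L (real^'n)).
        (\<forall>x. (f has_derivative blinfun_apply (f' x)) (at x)) \<and> continuous_on UNIV f')"

definition invariant_set_discrete :: "('a \<Rightarrow> 'a) \<Rightarrow> 'a set \<Rightarrow> bool" where
  "invariant_set_discrete fd S \<longleftrightarrow>
     (\<forall>xs :: nat \<Rightarrow> 'a. (\<forall>k. xs (Suc k) = fd (xs k)) \<longrightarrow>
        (\<forall>k. xs k \<in> S \<longrightarrow> xs (Suc k) \<in> S))"

definition quadratic_fun :: "(real^'n \<Rightarrow> real) \<Rightarrow> bool" where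
  "quadratic_fun q \<longleftrightarrow>
     (\<exists>(A :: real^'n^'n) (b :: real^'n) (c :: real). \<forall>x. q x = x \<bullet> (A *v x) + b \<bullet> x + c)"

end

theory Submission
  imports Defs
begin

text \<open>Invariance of S = {g \<le> 0} just says that h = g \<circ> fd is nonpositive wherever g is.
  Such an implication between sublevel sets becomes a multiplier inequality h \<le> \<alpha> g as soon
  as g takes a negative value and the \<^emph>\<open>crossing condition\<close> g x h y \<le> g y h x holds for all
  x, y with g x > 0 > g y: the multiplier is the supremum of h/g over {g > 0}, and the crossing
  condition bounds it by the infimum of h/g over {g < 0}. The crossing condition follows from
  the implication by looking at the segment from x to y: at the point where the chord of g
  vanishes, g is nonpositive by convexity, so h is nonpositive there; if h is concave, its
  chord is then nonpositive as well. If g and h are quadratic, both restrict to univariate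
  quadratics on the line through x and y, and there either the same chord argument applies
  or h minus a suitable multiple of g is affine and nonpositive at the two roots of g.\<close>

lemma invariant_set_discrete_sublevel_iff:
  "invariant_set_discrete fd {x. g x \<le> (0::real)} \<longleftrightarrow> (\<forall>x. g x \<le> 0 \<longrightarrow> g (fd x) \<le> 0)"
proof
  assume inv: "invariant_set_discrete fd {x. g x \<le> 0}"
  show "\<forall>x. g x \<le> 0 \<longrightarrow> g (fd x) \<le> 0"
  proof (intro allI impI)
    fix x assume "g x \<le> 0"
    have "(fd ^^ Suc 0) x \<in> {x. g x \<le> 0}"
      using inv[unfolded invariant_set_discrete_def, rule_format, of "\<lambda>k. (fd ^^ k) x" 0]
        \<open>g x \<le> 0\<close> by simp
    then show "g (fd x) \<le> 0" by simp
  qed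
next
  assume "\<forall>x. g x \<le> 0 \<longrightarrow> g (fd x) \<le> 0"
  then show "invariant_set_discrete fd {x. g x \<le> 0}"
    unfolding invariant_set_discrete_def by auto
qed

lemma exists_multiplier_if_crossing:
  fixes g h :: "'a \<Rightarrow> real"
  assumes x0: "g x0 < 0"
    and sublevel: "\<forall>x. g x \<le> 0 \<longrightarrow> h x \<le> 0"
    and crossing: "\<And>x y. g x > 0 \<Longrightarrow> g y < 0 \<Longrightarrow> g x * h y \<le> g y * h x"
  shows "\<exists>\<alpha>\<ge>0. \<forall>x. h x \<le> \<alpha> * g x"
proof (cases "\<exists>x. g x > 0")
  case False
  then show ?thesis using sublevel by (intro exI[of _ 0]) (auto simp: not_less)
next
  case True
  define T where "T = {h x / g x | x. g x > 0}"
  have sep: "h x / g x \<le> h y / g y" if "g x > 0" "g y < 0" for x y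
    using crossing[OF that] that by (simp add: divide_simps mult.commute)
  have "T \<noteq> {}" using True by (auto simp: T_def)
  have "bdd_above T" unfolding T_def bdd_above_def using sep[OF _ x0] by blast
  define \<alpha> where "\<alpha> = max 0 (Sup T)"
  have "h x \<le> \<alpha> * g x" for x
  proof -
    consider "g x > 0" | "g x = 0" | "g x < 0" by linarith
    then show ?thesis
    proof cases
      case 1
      then have "h x / g x \<le> \<alpha>"
        using cSup_upper[OF _ \<open>bdd_above T\<close>] unfolding \<alpha>_def T_def by fastforce
      then show ?thesis using 1 by (simp add: divide_simps)
    next
      case 2
      then show ?thesis using sublevel by auto
    next
      case 3
      have "Sup T \<le> h x / g x"
        using \<open>T \<noteq> {}\<close> by (rule cSup_least) (use sep 3 in \<open>auto simp: T_def\<close>)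
      moreover have "0 \<le> h x / g x" using sublevel 3 by (simp add: divide_nonpos_neg)
      ultimately have "\<alpha> \<le> h x / g x" by (simp add: \<alpha>_def)
      then show ?thesis using 3 by (simp add: divide_simps mult.commute)
    qed
  qed
  then show ?thesis by (intro exI[of _ \<alpha>]) (simp add: \<alpha>_def)
qed

lemma sublevel_implication_iff_multiplier:
  fixes g h :: "'a \<Rightarrow> real"
  assumes "g x0 < 0"
    and "\<And>x y. \<forall>z. g z \<le> 0 \<longrightarrow> h z \<le> 0 \<Longrightarrow> g x > 0 \<Longrightarrow> g y < 0 \<Longrightarrow>
                g x * h y \<le> g y * h x"
  shows "(\<forall>x. g x \<le> 0 \<longrightarrow> h x \<le> 0) \<longleftrightarrow> (\<exists>\<alpha>\<ge>0. \<forall>x. h x \<le> \<alpha> * g x)"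
proof
  assume "\<forall>x. g x \<le> 0 \<longrightarrow> h x \<le> 0"
  with assms show "\<exists>\<alpha>\<ge>0. \<forall>x. h x \<le> \<alpha> * g x" by (intro exists_multiplier_if_crossing) auto
next
  assume "\<exists>\<alpha>\<ge>0. \<forall>x. h x \<le> \<alpha> * g x"
  then show "\<forall>x. g x \<le> 0 \<longrightarrow> h x \<le> 0" by (meson mult_nonneg_nonpos order_trans)
qed

lemma crossing_if_convex_concave:
  fixes g h :: "'a::real_vector \<Rightarrow> real"
  assumes "convex_on UNIV g" and "concave_on UNIV h"
    and sublevel: "\<forall>z. g z \<le> 0 \<longrightarrow> h z \<le> 0"
    and gx: "g x > 0" and gy: "g y < 0"
  shows "g x * h y \<le> g y * h x"
proof -
  define \<tau> where "\<tau> = g x / (g x - g y)"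
  have d: "g x - g y > 0" using gx gy by simp
  have \<tau>: "0 \<le> \<tau>" "\<tau> \<le> 1" using gx gy by (auto simp: \<tau>_def divide_simps)
  have scale: "\<tau> * (g x - g y) = g x" using d by (simp add: \<tau>_def)
  have chord_eq: "((1 - \<tau>) * u + \<tau> * v) * (g x - g y) = g x * v - g y * u" for u v
  proof -
    have "((1 - \<tau>) * u + \<tau> * v) * (g x - g y) = u * (g x - g y) + (v - u) * (\<tau> * (g x - g y))"
      by (simp add: algebra_simps)
    then show ?thesis unfolding scale by (simp add: algebra_simps)
  qed
  define z where "z = (1 - \<tau>) *\<^sub>R x + \<tau> *\<^sub>R y"
  have "g z \<le> (1 - \<tau>) * g x + \<tau> * g y"
    using convex_onD[OF assms(1) \<tau>] by (simp add: z_def)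
  also have "\<dots> = 0" using chord_eq[of "g x" "g y"] d by (simp add: mult.commute)
  finally have "h z \<le> 0" using sublevel by blast
  moreover have "(1 - \<tau>) * h x + \<tau> * h y \<le> h z"
    using concave_onD[OF assms(2) \<tau>] by (simp add: z_def)
  ultimately have "((1 - \<tau>) * h x + \<tau> * h y) * (g x - g y) \<le> 0"
    using d by (simp add: mult_nonpos_nonneg)
  then show ?thesis unfolding chord_eq by simp
qed

lemma quadratic_pos_beyond:
  fixes a b c :: real
  assumes "a > 0"
  shows "\<exists>t\<ge>t0. a * t\<^sup>2 + b * t + c > 0"
proof -
  define t where "t = max t0 1 + (\<bar>b\<bar> + \<bar>c\<bar>) / a"
  have "(\<bar>b\<bar> + \<bar>c\<bar>) / a \<ge> 0" using assms by simp
  then have "t \<ge> t0" and "t \<ge> 1" by (auto simp: t_def)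
  have "a * t = a * max t0 1 + (\<bar>b\<bar> + \<bar>c\<bar>)" using assms by (simp add: t_def field_simps)
  moreover have "a * 1 \<le> a * max t0 1" using assms by (intro mult_left_mono) auto
  ultimately have "a * t \<ge> a + (\<bar>b\<bar> + \<bar>c\<bar>)" by simp
  then have "0 < t * (a * t - \<bar>b\<bar> - \<bar>c\<bar>)" using assms \<open>t \<ge> 1\<close> by simp
  also have "\<dots> \<le> a * t\<^sup>2 + b * t + c"
    using \<open>t \<ge> 1\<close> abs_ge_minus_self[of b] abs_ge_minus_self[of c]
      mult_right_mono[of "- \<bar>b\<bar>" b t] mult_left_mono[of 1 t "\<bar>c\<bar>"]
    by (simp add: power2_eq_square algebra_simps)
  finally show ?thesis using \<open>t \<ge> t0\<close> by blast
qed

text \<open>The leading terms of q and (\<alpha>/a) p cancel, so their difference is affine; it is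
  nonpositive at the two roots of p, which enclose \<tau>.\<close>

lemma quadratic_multiplier_between_roots:
  fixes a b c \<alpha> \<beta> \<gamma> \<tau> :: real
  defines "p \<equiv> \<lambda>t. a * t\<^sup>2 + b * t + c" and "q \<equiv> \<lambda>t. \<alpha> * t\<^sup>2 + \<beta> * t + \<gamma>"
  assumes "a > 0" and "p 0 > 0" and "0 \<le> \<tau>" and "p \<tau> \<le> 0"
    and sublevel: "\<And>t. p t \<le> 0 \<Longrightarrow> q t \<le> 0"
  shows "a * q \<tau> \<le> \<alpha> * p \<tau>"
proof -
  define r where "r = (\<lambda>t. a * q t - \<alpha> * p t)"
  have r_affine: "r t = (a * \<beta> - \<alpha> * b) * t + (a * \<gamma> - \<alpha> * c)" for t
    by (simp add: r_def p_def q_def algebra_simps)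
  have r_root: "r t \<le> 0" if "p t = 0" for t
    using sublevel[of t] that \<open>a > 0\<close> by (simp add: r_def mult_nonneg_nonpos)
  have cont: "continuous_on S p" for S unfolding p_def by (intro continuous_intros)
  obtain t1 where t1: "t1 \<le> \<tau>" "p t1 = 0"
    using IVT2'[of p \<tau> 0 0, OF _ _ _ cont] assms by auto
  obtain T where "T \<ge> \<tau>" "p T > 0"
    using quadratic_pos_beyond[OF \<open>a > 0\<close>] unfolding p_def by blast
  then obtain t2 where t2: "\<tau> \<le> t2" "p t2 = 0"
    using IVT'[of p \<tau> 0 T, OF _ _ _ cont] assms by auto
  have "r \<tau> \<le> 0"
  proof (cases "t1 = t2")
    case True
    then show ?thesis using t1 t2 r_root by (metis order_antisym)
  next
    case False
    then have "t1 < t2" using t1 t2 by linarith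
    have "r \<tau> * (t2 - t1) = (t2 - \<tau>) * r t1 + (\<tau> - t1) * r t2"
      unfolding r_affine by (simp add: algebra_simps)
    also have "\<dots> \<le> 0"
      using t1 t2 r_root by (intro add_nonpos_nonpos mult_nonneg_nonpos) auto
    finally show ?thesis using \<open>t1 < t2\<close> by (simp add: mult_le_0_iff)
  qed
  then show ?thesis by (simp add: r_def)
qed

lemma quadratic_crossing:
  fixes a b c \<alpha> \<beta> \<gamma> :: real
  defines "p \<equiv> \<lambda>t. a * t\<^sup>2 + b * t + c" and "q \<equiv> \<lambda>t. \<alpha> * t\<^sup>2 + \<beta> * t + \<gamma>"
  assumes "a \<ge> 0" and p0: "p 0 > 0" and p1: "p 1 < 0"
    and sublevel: "\<And>t. p t \<le> 0 \<Longrightarrow> q t \<le> 0"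
  shows "p 0 * q 1 \<le> p 1 * q 0"
proof -
  define \<tau> where "\<tau> = p 0 / (p 0 - p 1)"
  have d: "p 0 - p 1 > 0" using p0 p1 by simp
  have \<tau>: "0 < \<tau>" "\<tau> < 1" using p0 p1 by (auto simp: \<tau>_def divide_simps)
  have scale: "(p 0 - p 1) * \<tau> = p 0" using d by (simp add: \<tau>_def)
  have chord: "(p 0 - p 1) * ((1 - \<tau>) * u + \<tau> * v) = p 0 * v - p 1 * u" for u v
  proof -
    have "(p 0 - p 1) * ((1 - \<tau>) * u + \<tau> * v) = (p 0 - p 1) * u + ((p 0 - p 1) * \<tau>) * (v - u)"
      by (simp add: algebra_simps)
    then show ?thesis unfolding scale by (simp add: algebra_simps)
  qed
  have q_chord: "(1 - \<tau>) * q 0 + \<tau> * q 1 = q \<tau> + \<alpha> * (\<tau> * (1 - \<tau>))"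
    by (simp add: q_def power2_eq_square algebra_simps)
  have "(1 - \<tau>) * p 0 + \<tau> * p 1 = p \<tau> + a * (\<tau> * (1 - \<tau>))"
    by (simp add: p_def power2_eq_square algebra_simps)
  moreover have "(1 - \<tau>) * p 0 + \<tau> * p 1 = 0" using chord[of "p 0" "p 1"] d by simp
  ultimately have p\<tau>: "p \<tau> = - a * (\<tau> * (1 - \<tau>))" by simp
  have "\<tau> * (1 - \<tau>) \<ge> 0" using \<tau> by simp
  then have "p \<tau> \<le> 0" using p\<tau> \<open>a \<ge> 0\<close> by simp
  have "(1 - \<tau>) * q 0 + \<tau> * q 1 \<le> 0"
  proof -
    consider "\<alpha> \<le> 0" | "\<alpha> > 0" "a = 0" | "\<alpha> > 0" "a > 0" using \<open>a \<ge> 0\<close> by linarith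
    then show ?thesis
    proof cases
      case 1
      then have "\<alpha> * (\<tau> * (1 - \<tau>)) \<le> 0"
        using \<open>\<tau> * (1 - \<tau>) \<ge> 0\<close> by (simp add: mult_nonpos_nonneg)
      then show ?thesis
        unfolding q_chord using sublevel \<open>p \<tau> \<le> 0\<close> by (simp add: add_nonpos_nonpos)
    next
      case 2
      obtain T where "T \<ge> 1" "q T > 0"
        using quadratic_pos_beyond[OF \<open>\<alpha> > 0\<close>] unfolding q_def by blast
      moreover have "p T \<le> p 1"
        using \<open>T \<ge> 1\<close> p0 p1 2 by (simp add: p_def mult_left_mono_neg)
      ultimately show ?thesis using sublevel[of T] p1 by simp
    next
      case 3
      have "a * q \<tau> \<le> \<alpha> * p \<tau>"
        using quadratic_multiplier_between_roots[of a b c \<tau> \<alpha> \<beta> \<gamma>]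
          3 p0 \<tau> \<open>p \<tau> \<le> 0\<close> sublevel
        by (simp add: p_def q_def)
      then have "a * ((1 - \<tau>) * q 0 + \<tau> * q 1) \<le> 0"
        unfolding q_chord p\<tau> by (simp add: algebra_simps)
      then show ?thesis using 3 by (simp add: mult_le_0_iff)
    qed
  qed
  then have "(p 0 - p 1) * ((1 - \<tau>) * q 0 + \<tau> * q 1) \<le> 0"
    using d by (simp add: mult_nonneg_nonpos)
  then show ?thesis unfolding chord by simp
qed

lemma quadratic_along_line:
  fixes A :: "real^'n^'n"
  assumes "\<forall>x. q x = x \<bullet> (A *v x) + b \<bullet> x + c"
  shows "q (x + t *\<^sub>R d) =
    (d \<bullet> (A *v d)) * t\<^sup>2 + (x \<bullet> (A *v d) + d \<bullet> (A *v x) + b \<bullet> d) * t + q x"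
proof -
  have "(x + t *\<^sub>R d) \<bullet> (A *v (x + t *\<^sub>R d)) =
      x \<bullet> (A *v x) + t * (x \<bullet> (A *v d)) + t * (d \<bullet> (A *v x)) + t * t * (d \<bullet> (A *v d))"
    by (simp add: matrix_vector_right_distrib matrix_vector_mult_scaleR inner_add_left
        inner_add_right distrib_left)
  moreover have "b \<bullet> (x + t *\<^sub>R d) = b \<bullet> x + t * (b \<bullet> d)" by (simp add: inner_add_right)
  ultimately show ?thesis
    using assms by (simp add: power2_eq_square inner_commute[of b] algebra_simps)
qed

lemma crossing_if_convex_quadratic:
  fixes g h :: "real^'n \<Rightarrow> real"
  assumes "convex_on UNIV g" and "quadratic_fun g" and "quadratic_fun h"
    and sublevel: "\<forall>z. g z \<le> 0 \<longrightarrow> h z \<le> 0"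
    and gx: "g x > 0" and gy: "g y < 0"
  shows "g x * h y \<le> g y * h x"
proof -
  obtain A b c where A: "\<forall>x. g x = x \<bullet> (A *v x) + b \<bullet> x + c"
    using \<open>quadratic_fun g\<close> unfolding quadratic_fun_def by blast
  obtain A' b' c' where A': "\<forall>x. h x = x \<bullet> (A' *v x) + b' \<bullet> x + c'"
    using \<open>quadratic_fun h\<close> unfolding quadratic_fun_def by blast
  define d where "d = y - x"
  define a\<^sub>g b\<^sub>g a\<^sub>h b\<^sub>h where "a\<^sub>g = d \<bullet> (A *v d)" and "b\<^sub>g = x \<bullet> (A *v d) + d \<bullet> (A *v x) + b \<bullet> d"
    and "a\<^sub>h = d \<bullet> (A' *v d)" and "b\<^sub>h = x \<bullet> (A' *v d) + d \<bullet> (A' *v x) + b' \<bullet> d"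
  have g_line: "g (x + t *\<^sub>R d) = a\<^sub>g * t\<^sup>2 + b\<^sub>g * t + g x" for t
    unfolding a\<^sub>g_def b\<^sub>g_def by (rule quadratic_along_line[OF A])
  have h_line: "h (x + t *\<^sub>R d) = a\<^sub>h * t\<^sup>2 + b\<^sub>h * t + h x" for t
    unfolding a\<^sub>h_def b\<^sub>h_def by (rule quadratic_along_line[OF A'])
  have y: "x + 1 *\<^sub>R d = y" by (simp add: d_def)
  have gy_line: "g y = a\<^sub>g + b\<^sub>g + g x" and hy_line: "h y = a\<^sub>h + b\<^sub>h + h x"
    using g_line[of 1] h_line[of 1] unfolding y by simp_all
  have "g ((1 - 1/2) *\<^sub>R x + (1/2) *\<^sub>R y) \<le> (1 - 1/2) * g x + (1/2) * g y"
    by (rule convex_onD[OF assms(1)]) auto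
  moreover have "(1 - 1/2) *\<^sub>R x + (1/2::real) *\<^sub>R y = x + (1/2) *\<^sub>R d"
    unfolding d_def
    by (simp only: scaleR_diff_right scaleR_left_diff_distrib scaleR_one) (simp add: algebra_simps)
  ultimately have "a\<^sub>g \<ge> 0"
    using g_line[of "1/2"] gy_line by (simp add: power2_eq_square field_simps)
  moreover have "a\<^sub>h * t\<^sup>2 + b\<^sub>h * t + h x \<le> 0" if "a\<^sub>g * t\<^sup>2 + b\<^sub>g * t + g x \<le> 0" for t
    using sublevel g_line[of t] h_line[of t] that by metis
  ultimately have "g x * (a\<^sub>h + b\<^sub>h + h x) \<le> (a\<^sub>g + b\<^sub>g + g x) * h x"
    using quadratic_crossing[of a\<^sub>g b\<^sub>g "g x" a\<^sub>h b\<^sub>h "h x"] gx gy gy_line by simp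
  then show ?thesis unfolding gy_line hy_line .
qed

theorem theorem6:
  fixes g :: "real^'n \<Rightarrow> real" and fd :: "real^'n \<Rightarrow> real^'n"
  assumes "convex_on UNIV g"
    and "cont_diff_everywhere fd"
    and "\<exists>x0. g x0 < 0"
  shows "(concave_on UNIV (\<lambda>x. g (fd x)) \<longrightarrow>
            (invariant_set_discrete fd {x. g x \<le> 0} \<longleftrightarrow>
             (\<exists>\<alpha>::real. \<alpha> \<ge> 0 \<and> (\<forall>x. \<alpha> * g x - g (fd x) \<ge> 0))))
       \<and> (quadratic_fun g \<and> quadratic_fun (\<lambda>x. g (fd x)) \<longrightarrow>
            (invariant_set_discrete fd {x. g x \<le> 0} \<longleftrightarrow>
             (\<exists>\<alpha>::real. \<alpha> \<ge> 0 \<and> (\<forall>x. \<alpha> * g x - g (fd x) \<ge> 0))))"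
proof -
  obtain x0 where "g x0 < 0" using assms(3) by blast
  have multiplier_iff: "(\<forall>x. \<alpha> * g x - g (fd x) \<ge> 0) \<longleftrightarrow> (\<forall>x. g (fd x) \<le> \<alpha> * g x)" for \<alpha>
    by simp
  note invariance_iff =
    sublevel_implication_iff_multiplier[where g = g and h = "\<lambda>x. g (fd x)", OF \<open>g x0 < 0\<close>]
  show ?thesis
    unfolding invariant_set_discrete_sublevel_iff multiplier_iff
  proof (intro conjI impI)
    assume "concave_on UNIV (\<lambda>x. g (fd x))"
    then show "(\<forall>x. g x \<le> 0 \<longrightarrow> g (fd x) \<le> 0) \<longleftrightarrow> (\<exists>\<alpha>\<ge>0. \<forall>x. g (fd x) \<le> \<alpha> * g x)"
      by (intro invariance_iff crossing_if_convex_concave[OF assms(1)])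
  next
    assume "quadratic_fun g \<and> quadratic_fun (\<lambda>x. g (fd x))"
    then show "(\<forall>x. g x \<le> 0 \<longrightarrow> g (fd x) \<le> 0) \<longleftrightarrow> (\<exists>\<alpha>\<ge>0. \<forall>x. g (fd x) \<le> \<alpha> * g x)"
      by (intro invariance_iff crossing_if_convex_quadratic[OF assms(1)]) simp_all
  qed
qed

end
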